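(* Let $\Lambda>2$ be real. Then the equation $(1+\rho)^{\Lambda+1}=4(1-\rho+2\rho^2)^{\Lambda-1}$ has a unique solution $\rho^{\star\star}_\Lambda$ in the interval $(0,1)$, and for $\rho\in(0,1)$ the following are equivalent: (a) $(1+\rho)^{\Lambda+1}\le4(1-\rho+2\rho^2)^{\Lambda-1}$; (b) $\rho\le\rho^{\star\star}_\Lambda$. *)

theory Defs
  imports Complex_Main
begin

end

theory Submission imports Defs begin

text \<open>Taking logarithms, the inequality reads \<open>f \<rho> \<le> 0\<close> for
  \<open>f \<rho> = (\<Lambda>+1) ln (1+\<rho>) - (\<Lambda>-1) ln (1-\<rho>+2\<rho>\<^sup>2) - ln 4\<close>.
  The derivative of \<open>f\<close> has the sign of a quadratic which, for \<open>\<Lambda> > 2\<close>, is strictly decreasing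
  on \<open>[0,1]\<close>, positive at 0 and negative at 1; so \<open>f\<close> first increases and then decreases on
  \<open>[0,1]\<close>. As \<open>f 0 = - ln 4 < 0\<close> and \<open>f 1 = 0\<close>, \<open>f\<close> is positive on the decreasing branch
  and has exactly one zero, which lies on the increasing branch.\<close>

lemma unique_zero_of_unimodal:
  fixes f :: "real \<Rightarrow> real"
  assumes "a < c" "c < b"
    and mono: "strict_mono_on {a..c} f" and antimono: "strict_antimono_on {c..b} f"
    and cont: "continuous_on {a..b} f"
    and "f a < 0" "f b = 0"
  shows "\<exists>r\<in>{a<..<b}. \<forall>x\<in>{a<..<b}. (f x \<le> 0 \<longleftrightarrow> x \<le> r) \<and> (f x = 0 \<longleftrightarrow> x = r)"
proof -
  have pos_right: "f x > 0" if "c \<le> x" "x < b" for x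
    using monotone_onD[OF antimono, of x b] that assms by auto
  obtain r where r: "a \<le> r" "r \<le> c" "f r = 0"
    using IVT'[of f a 0 c] continuous_on_subset[OF cont] pos_right[of c] assms by auto
  have "a < r" "r < c"
    using r pos_right[of c] assms by (auto simp: less_le)
  moreover have "(f x \<le> 0 \<longleftrightarrow> x \<le> r) \<and> (f x = 0 \<longleftrightarrow> x = r)" if "a < x" "x < b" for x
  proof (cases "c \<le> x")
    case True
    then show ?thesis using pos_right[of x] that \<open>r < c\<close> by auto
  next
    case False
    then have "x \<in> {a..c}" "r \<in> {a..c}" using that r by auto
    then show ?thesis
      using r monotone_onD[OF mono, of x r] monotone_onD[OF mono, of r x]
      by (cases x r rule: linorder_cases) auto
  qed
  ultimately show ?thesis using assms by auto
qed

lemma unimodal_of_deriv_sign_change: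
  fixes f f' :: "real \<Rightarrow> real"
  assumes cont: "continuous_on {a..b} f"
    and deriv: "\<And>x. a < x \<Longrightarrow> x < b \<Longrightarrow> (f has_real_derivative f' x) (at x)"
    and pos: "\<And>x. a < x \<Longrightarrow> x < c \<Longrightarrow> f' x > 0"
    and neg: "\<And>x. c < x \<Longrightarrow> x < b \<Longrightarrow> f' x < 0"
    and "a \<le> c" "c \<le> b"
  shows "strict_mono_on {a..c} f" and "strict_antimono_on {c..b} f"
proof -
  show "strict_mono_on {a..c} f"
  proof (rule strict_mono_onI)
    fix x y assume xy: "x \<in> {a..c}" "y \<in> {a..c}" "x < y"
    have "continuous_on {x..y} f"
      using xy \<open>c \<le> b\<close> by (auto intro: continuous_on_subset[OF cont])
    moreover have "\<exists>d. (f has_real_derivative d) (at t) \<and> d > 0" if "x < t" "t < y" for t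
      using deriv[of t] pos[of t] xy that \<open>c \<le> b\<close> by auto
    ultimately show "f x < f y"
      using DERIV_pos_imp_increasing_open[OF \<open>x < y\<close>] by blast
  qed
  show "strict_antimono_on {c..b} f"
  proof (rule monotone_onI)
    fix x y assume xy: "x \<in> {c..b}" "y \<in> {c..b}" "x < y"
    have "continuous_on {x..y} f"
      using xy \<open>a \<le> c\<close> by (auto intro: continuous_on_subset[OF cont])
    moreover have "\<exists>d. (f has_real_derivative d) (at t) \<and> d < 0" if "x < t" "t < y" for t
      using deriv[of t] neg[of t] xy that \<open>a \<le> c\<close> by auto
    ultimately show "f y < f x"
      using DERIV_neg_imp_decreasing_open[OF \<open>x < y\<close>] by blast
  qed
qed

lemma one_minus_plus_twice_square_pos: "0 < 1 - x + 2 * (x::real)\<^sup>2"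
proof -
  have "1 - x + 2 * x\<^sup>2 = 2 * (x - 1/4)\<^sup>2 + 7/8"
    by (simp add: power2_eq_square algebra_simps)
  then show ?thesis by (metis add_nonneg_pos mult_nonneg_nonneg zero_le_power2 zero_le_numeral
    zero_less_divide_iff zero_less_numeral)
qed

definition log_gap :: "real \<Rightarrow> real \<Rightarrow> real" where
  "log_gap L x = (L + 1) * ln (1 + x) - (L - 1) * ln (1 - x + 2 * x\<^sup>2) - ln 4"

lemma powr_compare_iff_log_gap:
  fixes L x :: real
  assumes "x > -1"
  shows "(1 + x) powr (L + 1) \<le> 4 * (1 - x + 2 * x\<^sup>2) powr (L - 1) \<longleftrightarrow> log_gap L x \<le> 0"
    and "(1 + x) powr (L + 1) = 4 * (1 - x + 2 * x\<^sup>2) powr (L - 1) \<longleftrightarrow> log_gap L x = 0"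
proof -
  have lhs: "(1 + x) powr (L + 1) = exp ((L + 1) * ln (1 + x))"
    using assms by (simp add: powr_def)
  have rhs: "4 * (1 - x + 2 * x\<^sup>2) powr (L - 1) = exp (ln 4 + (L - 1) * ln (1 - x + 2 * x\<^sup>2))"
    using one_minus_plus_twice_square_pos[of x] by (simp add: powr_def exp_add)
  show "(1 + x) powr (L + 1) \<le> 4 * (1 - x + 2 * x\<^sup>2) powr (L - 1) \<longleftrightarrow> log_gap L x \<le> 0"
    unfolding lhs rhs log_gap_def exp_le_cancel_iff by (simp add: algebra_simps)
  show "(1 + x) powr (L + 1) = 4 * (1 - x + 2 * x\<^sup>2) powr (L - 1) \<longleftrightarrow> log_gap L x = 0"
    unfolding lhs rhs log_gap_def by auto
qed

lemma log_gap_at_0: "log_gap L 0 < 0"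
  by (simp add: log_gap_def)

lemma log_gap_at_1: "log_gap L 1 = 0"
proof -
  have "ln (4::real) = 2 * ln 2" using ln_mult[of 2 2] by simp
  then show ?thesis by (simp add: log_gap_def algebra_simps)
qed

definition log_gap_numerator :: "real \<Rightarrow> real \<Rightarrow> real" where
  "log_gap_numerator L x = (6 - 2 * L) * x\<^sup>2 + (2 - 4 * L) * x + 2 * L"

lemma has_real_derivative_log_gap:
  fixes L x :: real
  assumes "x > -1"
  shows "(log_gap L has_real_derivative
          log_gap_numerator L x / ((1 + x) * (1 - x + 2 * x\<^sup>2))) (at x)"
proof -
  have q: "0 < 1 - x + 2 * x\<^sup>2" by (rule one_minus_plus_twice_square_pos)
  have "(log_gap L has_real_derivative
     (L + 1) * (1 / (1 + x)) - (L - 1) * ((- 1 + 2 * (2 * x)) / (1 - x + 2 * x\<^sup>2)) - 0) (at x)"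
    unfolding log_gap_def [abs_def] using assms q by (auto intro!: derivative_eq_intros)
  moreover have "(L + 1) * (1 / (1 + x)) - (L - 1) * ((- 1 + 2 * (2 * x)) / (1 - x + 2 * x\<^sup>2)) - 0
     = log_gap_numerator L x / ((1 + x) * (1 - x + 2 * x\<^sup>2))"
    using assms q by (simp add: log_gap_numerator_def field_simps power2_eq_square)
  ultimately show ?thesis by simp
qed

lemma continuous_on_log_gap:
  fixes a b L :: real
  assumes "a > -1"
  shows "continuous_on {a..b} (log_gap L)"
proof (intro continuous_at_imp_continuous_on ballI)
  fix x assume "x \<in> {a..b}"
  then show "isCont (log_gap L) x"
    using assms by (intro DERIV_isCont[OF has_real_derivative_log_gap]) auto
qed

lemma log_gap_numerator_strict_antimono:
  fixes L x y :: real
  assumes "L > 2" "0 \<le> x" "x < y" "y \<le> 1"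
  shows "log_gap_numerator L y < log_gap_numerator L x"
proof -
  have slope: "(6 - 2 * L) * (x + y) + 2 - 4 * L < 0"
  proof (cases "L \<le> 3")
    case True
    then have "(6 - 2 * L) * (x + y) \<le> (6 - 2 * L) * 2"
      using assms by (intro mult_left_mono) auto
    then show ?thesis using assms by (simp add: algebra_simps)
  next
    case False
    then have "(6 - 2 * L) * (x + y) \<le> 0"
      using assms by (intro mult_nonpos_nonneg) auto
    then show ?thesis using assms by linarith
  qed
  have "log_gap_numerator L y - log_gap_numerator L x = (y - x) * ((6 - 2 * L) * (x + y) + 2 - 4 * L)"
    by (simp add: log_gap_numerator_def power2_eq_square algebra_simps)
  also have "\<dots> < 0" using slope assms by (intro mult_pos_neg) auto
  finally show ?thesis by simp
qed

lemma log_gap_numerator_sign_change: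
  fixes L :: real
  assumes "L > 2"
  obtains c where "0 < c" "c < 1"
    and "\<And>x. 0 \<le> x \<Longrightarrow> x < c \<Longrightarrow> log_gap_numerator L x > 0"
    and "\<And>x. c < x \<Longrightarrow> x \<le> 1 \<Longrightarrow> log_gap_numerator L x < 0"
proof -
  have at_0: "log_gap_numerator L 0 > 0" and at_1: "log_gap_numerator L 1 < 0"
    using assms by (simp_all add: log_gap_numerator_def)
  have "continuous_on {0..1} (log_gap_numerator L)"
    unfolding log_gap_numerator_def by (intro continuous_intros)
  then obtain c where c: "0 \<le> c" "c \<le> 1" "log_gap_numerator L c = 0"
    using IVT2'[of "log_gap_numerator L" 1 0 0] at_0 at_1 by auto
  show ?thesis
  proof (rule that)
    show "0 < c" "c < 1" using c at_0 at_1 by (auto simp: less_le)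
  qed (use c log_gap_numerator_strict_antimono[OF assms] in fastforce)+
qed

lemma log_gap_unimodal:
  fixes L :: real
  assumes "L > 2"
  obtains c where "0 < c" "c < 1"
    and "strict_mono_on {0..c} (log_gap L)" "strict_antimono_on {c..1} (log_gap L)"
proof -
  obtain c where c: "0 < c" "c < 1"
    and pos: "\<And>x. 0 \<le> x \<Longrightarrow> x < c \<Longrightarrow> log_gap_numerator L x > 0"
    and neg: "\<And>x. c < x \<Longrightarrow> x \<le> 1 \<Longrightarrow> log_gap_numerator L x < 0"
    using log_gap_numerator_sign_change[OF assms] by blast
  define D where "D x = log_gap_numerator L x / ((1 + x) * (1 - x + 2 * x\<^sup>2))" for x
  have deriv: "(log_gap L has_real_derivative D x) (at x)" if "0 < x" "x < 1" for x
    unfolding D_def using that by (intro has_real_derivative_log_gap) simp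
  have deriv_pos: "D x > 0" if "0 < x" "x < c" for x
    unfolding D_def using pos[of x] one_minus_plus_twice_square_pos[of x] that by simp
  have deriv_neg: "D x < 0" if "c < x" "x < 1" for x
    unfolding D_def using neg[of x] one_minus_plus_twice_square_pos[of x] that c
    by (simp add: divide_neg_pos)
  have "continuous_on {0..1} (log_gap L)" by (rule continuous_on_log_gap) simp
  from unimodal_of_deriv_sign_change[OF this deriv deriv_pos deriv_neg] c show ?thesis
    by (intro that) auto
qed

theorem lemma8p3:
  fixes \<Lambda> :: real
  assumes "\<Lambda> > 2"
  shows "(\<exists>!r. 0 < r \<and> r < 1 \<and>
           (1 + r) powr (\<Lambda> + 1) = 4 * (1 - r + 2 * r\<^sup>2) powr (\<Lambda> - 1)) \<and>
         (\<forall>r. (0 < r \<and> r < 1 \<and>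
           (1 + r) powr (\<Lambda> + 1) = 4 * (1 - r + 2 * r\<^sup>2) powr (\<Lambda> - 1)) \<longrightarrow>
         (\<forall>\<rho>::real. 0 < \<rho> \<and> \<rho> < 1 \<longrightarrow>
            ((1 + \<rho>) powr (\<Lambda> + 1) \<le> 4 * (1 - \<rho> + 2 * \<rho>\<^sup>2) powr (\<Lambda> - 1)
             \<longleftrightarrow> \<rho> \<le> r)))"
proof -
  obtain c where c: "0 < c" "c < 1"
    and mono: "strict_mono_on {0..c} (log_gap \<Lambda>)"
    and antimono: "strict_antimono_on {c..1} (log_gap \<Lambda>)"
    using log_gap_unimodal[OF assms] by blast
  have "continuous_on {0..1} (log_gap \<Lambda>)" by (rule continuous_on_log_gap) simp
  then obtain r where r: "r \<in> {0<..<1}" and sign: "\<forall>x\<in>{0<..<1}.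
      (log_gap \<Lambda> x \<le> 0 \<longleftrightarrow> x \<le> r) \<and> (log_gap \<Lambda> x = 0 \<longleftrightarrow> x = r)"
    using unique_zero_of_unimodal[OF c mono antimono _ log_gap_at_0 log_gap_at_1] by blast
  have le_iff: "(1 + x) powr (\<Lambda> + 1) \<le> 4 * (1 - x + 2 * x\<^sup>2) powr (\<Lambda> - 1) \<longleftrightarrow> x \<le> r"
    and eq_iff: "(1 + x) powr (\<Lambda> + 1) = 4 * (1 - x + 2 * x\<^sup>2) powr (\<Lambda> - 1) \<longleftrightarrow> x = r"
    if "0 < x" "x < 1" for x
    using sign that by (simp_all add: powr_compare_iff_log_gap)
  show ?thesis
    using r le_iff eq_iff by (metis greaterThanLessThan_iff)
qed

end
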